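(* Let $R$ be an associative unital division ring over a field $F$ of characteristic $0$, $\lambda\in F$, and $v_{m,n}\in R$ invertible for all $(m,n)\in\mathbb{Z}^2$. Define $$\mathcal{L}_{m,n}=\begin{pmatrix}-v_{m,n}^{-1} & \lambda\\ 1 & -v_{m,n}\end{pmatrix},\qquad \mathcal{M}_{m,n}=\begin{pmatrix}v_{m+1,n}-v_{m,n}^{-1} & \lambda\\ 1 & 0\end{pmatrix}.$$ If the compatibility condition $\mathcal{L}_{m+1,n}\mathcal{M}_{m,n}=\mathcal{M}_{m,n+1}\mathcal{L}_{m,n}$ of the system $\Psi_{m,n+1}=\mathcal{L}_{m,n}\Psi_{m,n}$, $\Psi_{m+1,n}=\mathcal{M}_{m,n}\Psi_{m,n}$ holds for all $(m,n)$, then for all $(m,n)$ $$v_{m+1,n+1}-v_{m,n}=v_{m,n+1}^{-1}-v_{m+1,n}^{-1}.$$ *)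

theory Defs
  imports Main
begin

text \<open>2x2 matrices over a (possibly noncommutative) ring, entries (a11, a12, a21, a22).\<close>
type_synonym 'r mat2 = "'r \<times> 'r \<times> 'r \<times> 'r"

fun mat2_mult :: "'r::ring mat2 \<Rightarrow> 'r mat2 \<Rightarrow> 'r mat2" where
  "mat2_mult (a, b, c, d) (e, f, g, h) =
     (a * e + b * g, a * f + b * h, c * e + d * g, c * f + d * h)"

text \<open>R is an algebra over the field F: a unital ring homomorphism F \<rightarrow> R with central image.\<close>
definition algebra_map :: "('f::field \<Rightarrow> 'r::ring_1) \<Rightarrow> bool" where
  "algebra_map phi \<longleftrightarrow> phi 1 = 1 \<and> (\<forall>a b. phi (a + b) = phi a + phi b)
     \<and> (\<forall>a b. phi (a * b) = phi a * phi b) \<and> (\<forall>a x. phi a * x = x * phi a)"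

definition Lmat :: "('f::field \<Rightarrow> 'r::division_ring) \<Rightarrow> 'f \<Rightarrow> (int \<Rightarrow> int \<Rightarrow> 'r) \<Rightarrow> int \<Rightarrow> int \<Rightarrow> 'r mat2" where
  "Lmat phi lam v m n = (- inverse (v m n), phi lam, 1, - v m n)"

definition Mmat :: "('f::field \<Rightarrow> 'r::division_ring) \<Rightarrow> 'f \<Rightarrow> (int \<Rightarrow> int \<Rightarrow> 'r) \<Rightarrow> int \<Rightarrow> int \<Rightarrow> 'r mat2" where
  "Mmat phi lam v m n = (v (m + 1) n - inverse (v m n), phi lam, 1, 0)"

end

theory Submission
  imports Defs
begin

text \<open>Only the upper-left entries of the compatibility condition are needed. The spectral
  parameter \<open>\<lambda>\<close> enters them additively on both sides and cancels; multiplying what remains on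
  the right by \<open>v\<^sub>m\<^sub>,\<^sub>n\<close> gives the lattice equation.\<close>

lemma fst_mat2_mult_Lmat_Mmat:
  "fst (mat2_mult (Lmat phi lam v (m + 1) n) (Mmat phi lam v m n))
     = - inverse (v (m + 1) n) * (v (m + 1) n - inverse (v m n)) + phi lam"
  by (simp add: Lmat_def Mmat_def)

lemma fst_mat2_mult_Mmat_Lmat:
  "fst (mat2_mult (Mmat phi lam v m (n + 1)) (Lmat phi lam v m n))
     = (v (m + 1) (n + 1) - inverse (v m (n + 1))) * - inverse (v m n) + phi lam"
  by (simp add: Lmat_def Mmat_def)

lemma lattice_equation_of_upper_left_entries:
  fixes a b c d :: "'r::division_ring"
  assumes "a \<noteq> 0" "b \<noteq> 0"
    and entries: "- inverse a * (a - inverse b) = (c - inverse d) * - inverse b"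
  shows "c - b = inverse d - inverse a"
proof -
  have "- inverse a * (a - inverse b) = (inverse a - b) * inverse b"
    using \<open>a \<noteq> 0\<close> \<open>b \<noteq> 0\<close> by (simp add: algebra_simps)
  with entries have "(inverse a - b) * inverse b = (inverse d - c) * inverse b"
    by (simp add: algebra_simps)
  then have "inverse a - b = inverse d - c"
    using \<open>b \<noteq> 0\<close> by (simp add: mult_right_cancel)
  then show ?thesis
    by (simp add: algebra_simps)
qed

theorem proposition5p1:
  fixes phi :: "'f::field_char_0 \<Rightarrow> 'r::division_ring"
    and lam :: 'f
    and v :: "int \<Rightarrow> int \<Rightarrow> 'r"
  assumes alg: "algebra_map phi"
    and inv: "\<And>m n. v m n \<noteq> 0"
    and compat: "\<And>m n. mat2_mult (Lmat phi lam v (m + 1) n) (Mmat phi lam v m n)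
                       = mat2_mult (Mmat phi lam v m (n + 1)) (Lmat phi lam v m n)"
  shows "\<forall>m n. v (m + 1) (n + 1) - v m n = inverse (v m (n + 1)) - inverse (v (m + 1) n)"
proof (intro allI)
  fix m n
  have "- inverse (v (m + 1) n) * (v (m + 1) n - inverse (v m n))
      = (v (m + 1) (n + 1) - inverse (v m (n + 1))) * - inverse (v m n)"
    using arg_cong [OF compat [of m n], of fst]
    by (simp only: fst_mat2_mult_Lmat_Mmat fst_mat2_mult_Mmat_Lmat add_right_cancel)
  then show "v (m + 1) (n + 1) - v m n = inverse (v m (n + 1)) - inverse (v (m + 1) n)"
    by (rule lattice_equation_of_upper_left_entries [OF inv inv])
qed

end
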